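(* Let $\mathcal{K}=(\Sigma,\to,\ell)$ be a Kripke structure over a set $AP$ of atoms and let $R\in\mathrm{PreOrd}(\Sigma)$. Then $R$ is a simulation on $\mathcal{K}$ if and only if $\mathrm{add}(R)$ is forward complete for $\{\mathbf{p}\mid p\in AP\}\cup\{\widetilde{\mathrm{pre}}_\to\}$.
   Context: A Kripke structure has a total transition relation $\to\subseteq\Sigma\times\Sigma$ and labeling $\ell:\Sigma\to\wp(AP)$; $\mathbf{p}=\{s\mid p\in\ell(s)\}$. $\widetilde{\mathrm{pre}}_\to(Y)=\{a\in\Sigma\mid\forall b\in\Sigma.\,(a\to b\Rightarrow b\in Y)\}$. $\mathrm{PreOrd}(\Sigma)$ is the set of reflexive transitive relations on $\Sigma$. A relation $R\subseteq\Sigma\times\Sigma$ is a simulation if whenever $sRs'$: $\ell(s')\subseteq\ell(s)$, and for every $t$ with $s\to t$ there is $t'$ with $s'\to t'$ and $tRt'$. For $R\in\mathrm{PreOrd}(\Sigma)$, $\mathrm{add}(R)$ is the abstract domain of $\wp(\Sigma)$ whose associated upper closure operator is $\mathrm{pre}_R(S)=\{x\in\Sigma\mid\exists y\in S.\,xRy\}$. A closure $\mu$ is forward complete for a constant $k\subseteq\Sigma$ if $\mu(k)=k$, and for a unary $f$ if $f(\mu(X))=\mu(f(\mu(X)))$ for all $X\subseteq\Sigma$. *)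

theory Defs
  imports Main
begin

text \<open>Kripke structure: states of type 's (\<Sigma> = UNIV), atoms of type 'ap (AP = UNIV),
  transition relation T, labeling L.\<close>

definition total_rel :: "('s \<times> 's) set \<Rightarrow> bool" where
  "total_rel T \<longleftrightarrow> (\<forall>s. \<exists>t. (s, t) \<in> T)"

definition atom_set :: "('s \<Rightarrow> 'ap set) \<Rightarrow> 'ap \<Rightarrow> 's set" where
  "atom_set L p = {s. p \<in> L s}"

definition pre_tilde :: "('s \<times> 's) set \<Rightarrow> 's set \<Rightarrow> 's set" where
  "pre_tilde T Y = {a. \<forall>b. (a, b) \<in> T \<longrightarrow> b \<in> Y}"

definition preord :: "('s \<times> 's) set \<Rightarrow> bool" where
  "preord R \<longleftrightarrow> refl R \<and> trans R"

definition simulation :: "('s \<times> 's) set \<Rightarrow> ('s \<Rightarrow> 'ap set) \<Rightarrow> ('s \<times> 's) set \<Rightarrow> bool" where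
  "simulation T L R \<longleftrightarrow> (\<forall>s s'. (s, s') \<in> R \<longrightarrow>
      L s' \<subseteq> L s \<and> (\<forall>t. (s, t) \<in> T \<longrightarrow> (\<exists>t'. (s', t') \<in> T \<and> (t, t') \<in> R)))"

text \<open>Upper closure operator associated with add(R).\<close>
definition pre_R :: "('s \<times> 's) set \<Rightarrow> 's set \<Rightarrow> 's set" where
  "pre_R R S = {x. \<exists>y\<in>S. (x, y) \<in> R}"

definition fc_const :: "('s set \<Rightarrow> 's set) \<Rightarrow> 's set \<Rightarrow> bool" where
  "fc_const \<mu> k \<longleftrightarrow> \<mu> k = k"

definition fc_unary :: "('s set \<Rightarrow> 's set) \<Rightarrow> ('s set \<Rightarrow> 's set) \<Rightarrow> bool" where
  "fc_unary \<mu> f \<longleftrightarrow> (\<forall>X. f (\<mu> X) = \<mu> (f (\<mu> X)))"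

end

theory Submission
  imports Defs
begin

text \<open>The sets fixed by \<open>pre_R R\<close> are exactly the R-downward closed ones, so both
  completeness conditions say that certain sets are downward closed. For the atoms this is
  the label inclusion of a simulation. For \<open>pre_tilde T\<close>, downward closedness of
  \<open>pre_tilde T Y\<close> for downward closed Y is the step condition of a simulation;
  conversely, the step condition at \<open>(s, s')\<close> is recovered from the downward closure
  of the successor set of \<open>s'\<close>.\<close>

definition downward_closed :: "('s \<times> 's) set \<Rightarrow> 's set \<Rightarrow> bool" where
  "downward_closed R S \<longleftrightarrow> (\<forall>x y. (x, y) \<in> R \<longrightarrow> y \<in> S \<longrightarrow> x \<in> S)"

definition step_simulation :: "('s \<times> 's) set \<Rightarrow> ('s \<times> 's) set \<Rightarrow> bool" where
  "step_simulation T R \<longleftrightarrow>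
     (\<forall>s s' t. (s, s') \<in> R \<longrightarrow> (s, t) \<in> T \<longrightarrow> (\<exists>t'. (s', t') \<in> T \<and> (t, t') \<in> R))"

lemma simulation_iff_labels_and_steps:
  "simulation T L R \<longleftrightarrow> (\<forall>s s'. (s, s') \<in> R \<longrightarrow> L s' \<subseteq> L s) \<and> step_simulation T R"
  unfolding simulation_def step_simulation_def by blast

lemma subset_pre_R: "refl R \<Longrightarrow> S \<subseteq> pre_R R S"
  unfolding pre_R_def by (auto dest: refl_onD)

lemma pre_R_eq_iff_downward_closed:
  assumes "refl R"
  shows "pre_R R S = S \<longleftrightarrow> downward_closed R S"
  using subset_pre_R[OF assms, of S] unfolding pre_R_def downward_closed_def by blast

lemma downward_closed_pre_R: "trans R \<Longrightarrow> downward_closed R (pre_R R X)"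
  unfolding downward_closed_def pre_R_def by (blast dest: transD)

lemma fc_unary_pre_R_iff:
  assumes "refl R"
  shows "fc_unary (pre_R R) f \<longleftrightarrow> (\<forall>X. downward_closed R (f (pre_R R X)))"
  unfolding fc_unary_def using pre_R_eq_iff_downward_closed[OF assms] by metis

lemma downward_closed_atom_sets_iff:
  "(\<forall>p. downward_closed R (atom_set L p)) \<longleftrightarrow> (\<forall>s s'. (s, s') \<in> R \<longrightarrow> L s' \<subseteq> L s)"
  unfolding downward_closed_def atom_set_def by blast

lemma downward_closed_pre_tilde:
  assumes "step_simulation T R" and "downward_closed R Y"
  shows "downward_closed R (pre_tilde T Y)"
  using assms unfolding step_simulation_def downward_closed_def pre_tilde_def by blast

lemma step_simulation_if_downward_closed_pre_tilde:
  assumes "refl R" and closed: "\<And>X. downward_closed R (pre_tilde T (pre_R R X))"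
  shows "step_simulation T R"
  unfolding step_simulation_def
proof (intro allI impI)
  fix s s' t assume "(s, s') \<in> R" and "(s, t) \<in> T"
  let ?succ = "{t'. (s', t') \<in> T}"
  have "s' \<in> pre_tilde T (pre_R R ?succ)"
    using subset_pre_R[OF \<open>refl R\<close>, of ?succ] unfolding pre_tilde_def by auto
  with closed[of ?succ] \<open>(s, s') \<in> R\<close> have "s \<in> pre_tilde T (pre_R R ?succ)"
    unfolding downward_closed_def by blast
  with \<open>(s, t) \<in> T\<close> show "\<exists>t'. (s', t') \<in> T \<and> (t, t') \<in> R"
    unfolding pre_tilde_def pre_R_def by blast
qed

lemma step_simulation_iff_fc_unary_pre_tilde:
  assumes "preord R"
  shows "step_simulation T R \<longleftrightarrow> fc_unary (pre_R R) (pre_tilde T)"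
proof -
  from assms have "refl R" and "trans R" unfolding preord_def by auto
  show ?thesis
    unfolding fc_unary_pre_R_iff[OF \<open>refl R\<close>]
  proof
    assume "step_simulation T R"
    with \<open>trans R\<close> show "\<forall>X. downward_closed R (pre_tilde T (pre_R R X))"
      by (simp add: downward_closed_pre_tilde downward_closed_pre_R)
  qed (use \<open>refl R\<close> step_simulation_if_downward_closed_pre_tilde in blast)
qed

theorem theorem7p8:
  fixes T :: "('s \<times> 's) set" and L :: "'s \<Rightarrow> 'ap set" and R :: "('s \<times> 's) set"
  assumes "total_rel T"
    and "preord R"
  shows "simulation T L R \<longleftrightarrow>
           ((\<forall>p. fc_const (pre_R R) (atom_set L p)) \<and> fc_unary (pre_R R) (pre_tilde T))"
proof -
  have "refl R" using \<open>preord R\<close> unfolding preord_def by simp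
  have "(\<forall>p. fc_const (pre_R R) (atom_set L p)) \<longleftrightarrow> (\<forall>s s'. (s, s') \<in> R \<longrightarrow> L s' \<subseteq> L s)"
    unfolding fc_const_def pre_R_eq_iff_downward_closed[OF \<open>refl R\<close>]
    by (rule downward_closed_atom_sets_iff)
  then show ?thesis
    unfolding simulation_iff_labels_and_steps step_simulation_iff_fc_unary_pre_tilde[OF \<open>preord R\<close>]
    by simp
qed

end
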